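(* Let $\mathcal{H}$ be a hierarchical generator. Then there exist positive coefficients $c_\varphi>0$, $\varphi\in\mathcal{H}$, such that $\sum_{\varphi\in\mathcal{H}}c_\varphi\varphi=1$ on $\Omega=[0,1]^d$.
   Context: Fix integers $d\ge1$, $n\ge2$, $m\ge2$; $s=n-1$, $p=m-1$. B-splines $\varphi^\ell_{\vec i}(\vec x)=\prod_kQ(n^\ell x_k-i_k)$ for $\ell\in\mathbb{Z}_{\ge0}$, $\vec i\in\mathbb{Z}^d$, where $Q$ is the uniform B-spline of order $m$ with knots $0,\dots,m$ normalized so that its integer translates sum to one; $\mathfrak{B}$ the set of all of them. $\mathcal{B}^0=\{\varphi^0_{\vec i}:\vec i\in[-p:0]^d\}$ (these sum to $1$ on $[0,1]^d$). Children $\mathrm{ch}(\varphi^\ell_{\vec i})=\{\varphi^{\ell+1}_{\vec k}:n\vec i\le\vec k\le n\vec i+sm\}$, extended to sets by union. A lineage is a finite $\mathcal{L}\subset\mathfrak{B}$ with $\mathcal{L}\subset\mathcal{B}^0\cup\mathrm{ch}(\mathcal{L})$; its hierarchical generator is $(\mathcal{B}^0\cup\mathrm{ch}(\mathcal{L}))\setminus\mathcal{L}$, and a hierarchical generator is any set arising this way. *)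

theory Defs
  imports Main "HOL-Library.Indicator_Function" Complex_Main
begin

text \<open>Uniform (cardinal) B-spline of order m with knots 0,...,m, normalized so that its
integer translates sum to one (Cox--de Boor recurrence).\<close>
fun bspline :: "nat \<Rightarrow> real \<Rightarrow> real" where
  "bspline 0 x = 0"
| "bspline (Suc 0) x = (if 0 \<le> x \<and> x < 1 then 1 else 0)"
| "bspline (Suc (Suc k)) x =
     (x * bspline (Suc k) x + (real (k + 2) - x) * bspline (Suc k) (x - 1)) / real (k + 1)"

text \<open>A B-spline phi^l_i is represented by its index (l, i), with i an integer vector of
length d. Points of R^d are functions nat => real (coordinates 0..d-1).\<close>
type_synonym bidx = "nat \<times> int list"

definition phi :: "nat \<Rightarrow> nat \<Rightarrow> nat \<Rightarrow> bidx \<Rightarrow> (nat \<Rightarrow> real) \<Rightarrow> real" where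
  "phi d n m b x = (\<Prod>k<d. bspline m (real n ^ fst b * x k - real_of_int (snd b ! k)))"

definition allB :: "nat \<Rightarrow> bidx set" where
  "allB d = {b. length (snd b) = d}"

definition B0 :: "nat \<Rightarrow> nat \<Rightarrow> bidx set" where
  "B0 d m = {(0, i) | i. length i = d \<and> (\<forall>k<d. - (int m - 1) \<le> i ! k \<and> i ! k \<le> 0)}"

definition ch :: "nat \<Rightarrow> nat \<Rightarrow> bidx \<Rightarrow> bidx set" where
  "ch n m b = {(Suc (fst b), j) | j. length j = length (snd b) \<and>
      (\<forall>k<length (snd b). int n * snd b ! k \<le> j ! k \<and>
                            j ! k \<le> int n * snd b ! k + (int n - 1) * int m)}"

definition chs :: "nat \<Rightarrow> nat \<Rightarrow> bidx set \<Rightarrow> bidx set" where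
  "chs n m L = (\<Union>b\<in>L. ch n m b)"

definition lineage :: "nat \<Rightarrow> nat \<Rightarrow> nat \<Rightarrow> bidx set \<Rightarrow> bool" where
  "lineage d n m L \<longleftrightarrow> finite L \<and> L \<subseteq> allB d \<and> L \<subseteq> B0 d m \<union> chs n m L"

definition hgen :: "nat \<Rightarrow> nat \<Rightarrow> nat \<Rightarrow> bidx set \<Rightarrow> bidx set" where
  "hgen d n m L = (B0 d m \<union> chs n m L) - L"

definition hierarchical_generator :: "nat \<Rightarrow> nat \<Rightarrow> nat \<Rightarrow> bidx set \<Rightarrow> bool" where
  "hierarchical_generator d n m H \<longleftrightarrow> (\<exists>L. lineage d n m L \<and> H = hgen d n m L)"

end

(*
  Every B-spline is a positive combination of its children: the uniform B-spline Q of order m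
  satisfies the two-scale relation Q(y) = \<Sum>\<^sub>j a\<^sub>j Q(n y - j), whose mask
  a\<^sub>j = n\<^sup>1\<^sup>-\<^sup>m [z\<^sup>j] (1 + z + ... + z\<^sup>n\<^sup>-\<^sup>1)\<^sup>m is positive exactly for 0 \<le> j \<le> (n - 1) m, and
  tensor products inherit this.  The initial B-splines sum to one on the unit cube.  Removing a
  node of maximal level from a lineage leaves a smaller lineage whose generator contains that node,
  and substituting the node's refinement into a positive representation of 1 by that generator gives
  one for the original generator; so the claim follows by induction on the size of the lineage.
*)
theory Submission
  imports Defs "HOL-Library.Groups_Big_Fun" "HOL-Library.FuncSet"
begin

section \<open>Finitely supported sums over the integers\<close>

lemma Sum_any_int_shift: "Sum_any (\<lambda>j::int. f (j + s)) = (Sum_any f :: 'a::comm_monoid_add)"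
proof -
  have "bij (\<lambda>j::int. j + s)"
    by (rule bij_betwI[where g = "\<lambda>j. j - s"]) auto
  then show ?thesis
    by (rule Sum_any.reindex_cong[symmetric]) (simp add: comp_def)
qed

lemma finite_nonzero_mono:
  "finite {j. f j \<noteq> (0::'b::zero)} \<Longrightarrow> (\<And>j. f j = 0 \<Longrightarrow> g j = (0::'c::zero)) \<Longrightarrow>
   finite {j. g j \<noteq> 0}"
  by (rule finite_subset[of _ "{j. f j \<noteq> 0}"]) auto

lemma finite_nonzero_int_shift:
  assumes "finite {j. f j \<noteq> (0::'b::zero)}"
  shows "finite {j::int. f (j + s) \<noteq> 0}"
proof -
  have "{j::int. f (j + s) \<noteq> 0} = (\<lambda>j. j - s) ` {j. f j \<noteq> 0}"
    by (auto simp: image_iff) (metis add_diff_cancel_right')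
  then show ?thesis using assms by simp
qed

lemma Sum_any_int_add_shift:
  fixes g h :: "int \<Rightarrow> 'a::comm_monoid_add"
  assumes "finite {j. g j \<noteq> 0}" "finite {j. h j \<noteq> 0}"
  shows "Sum_any (\<lambda>j. g j + h (j + 1)) = Sum_any (\<lambda>j. g j + h j)"
  using assms
  by (simp add: Sum_any.distrib finite_nonzero_int_shift Sum_any_int_shift)

lemma Sum_any_lincomb:
  fixes f g :: "'a \<Rightarrow> 'b::comm_semiring_0"
  assumes "finite {i. f i \<noteq> 0}" "finite {i. g i \<noteq> 0}"
  shows "Sum_any (\<lambda>i. \<alpha> * f i + \<beta> * g i) = \<alpha> * Sum_any f + \<beta> * Sum_any g"
proof -
  have "finite {i. \<alpha> * f i \<noteq> 0}" "finite {i. \<beta> * g i \<noteq> 0}"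
    by (rule finite_nonzero_mono[OF assms(1)], simp, rule finite_nonzero_mono[OF assms(2)], simp)
  then show ?thesis
    by (simp add: Sum_any.distrib Sum_any_right_distrib assms)
qed

section \<open>Uniform B-splines\<close>

lemma bspline_nonzero_imp_bounds: "bspline m y \<noteq> 0 \<Longrightarrow> 0 \<le> y \<and> y < real m"
proof (induction m y rule: bspline.induct)
  case (3 k x)
  then have "bspline (Suc k) x \<noteq> 0 \<or> bspline (Suc k) (x - 1) \<noteq> 0"
    by auto
  with 3 show ?case by auto
qed (auto split: if_splits)

lemma bspline_nonzero_imp_pos:
  assumes "2 \<le> m" "bspline m y \<noteq> 0"
  shows "0 < y"
proof -
  obtain k where k: "m = Suc (Suc k)"
    using assms(1) by (metis add_2_eq_Suc le_Suc_ex)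
  then have "(y \<noteq> 0 \<and> bspline (Suc k) y \<noteq> 0) \<or> bspline (Suc k) (y - 1) \<noteq> 0"
    using assms(2) by auto
  then show ?thesis
    using bspline_nonzero_imp_bounds[of "Suc k" y] bspline_nonzero_imp_bounds[of "Suc k" "y - 1"]
    by force
qed

lemma finite_bspline_translates_support: "finite {j::int. bspline m (x - of_int j) \<noteq> 0}"
proof (rule finite_subset)
  show "{j::int. bspline m (x - of_int j) \<noteq> 0} \<subseteq> {\<lfloor>x\<rfloor> - int m .. \<lfloor>x\<rfloor>}"
  proof
    fix j assume "j \<in> {j::int. bspline m (x - of_int j) \<noteq> 0}"
    then have "0 \<le> x - of_int j" "x - of_int j < real m"
      using bspline_nonzero_imp_bounds by blast+
    then show "j \<in> {\<lfloor>x\<rfloor> - int m .. \<lfloor>x\<rfloor>}"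
      by (auto simp: le_floor_iff) linarith
  qed
qed simp

lemma bspline_Suc_Suc_translate:
  "bspline (Suc (Suc k)) (x - of_int j) =
     ((x - of_int j) * bspline (Suc k) (x - of_int j)
      + (real k + 2 - (x - of_int j)) * bspline (Suc k) (x - of_int (j + 1))) / real (Suc k)"
  by (simp add: diff_diff_add add.commute)

lemma bspline_one_eq_indicator: "bspline 1 (x - of_int j) = (if j = \<lfloor>x\<rfloor> then 1 else 0)"
  by (simp add: floor_eq_iff) linarith

lemma Sum_any_bspline_translates:
  assumes "1 \<le> m"
  shows "Sum_any (\<lambda>j::int. bspline m (x - of_int j)) = 1"
  using assms
proof (induction m arbitrary: x rule: nat_induct_at_least)
  case base
  show ?case by (simp only: bspline_one_eq_indicator) simp
next
  case (Suc mm)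
  then obtain k where k: "mm = Suc k" by (metis Suc_le_D One_nat_def)
  define F where "F i = bspline (Suc k) (x - of_int i)" for i :: int
  have finF: "finite {i. F i \<noteq> 0}"
    unfolding F_def by (rule finite_bspline_translates_support)
  define A where "A i = (x - of_int i) * F i / real (Suc k)" for i :: int
  define B where "B i = (real k + 1 - x + of_int i) * F i / real (Suc k)" for i :: int
  have "Sum_any (\<lambda>j::int. bspline (Suc mm) (x - of_int j)) = Sum_any (\<lambda>j. A j + B (j + 1))"
    by (rule Sum_any.cong)
      (simp only: k bspline_Suc_Suc_translate, simp add: A_def B_def F_def add_divide_distrib)
  also have "\<dots> = Sum_any (\<lambda>j. A j + B j)"
    by (rule Sum_any_int_add_shift; rule finite_nonzero_mono[OF finF]) (simp_all add: A_def B_def)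
  also have "\<dots> = Sum_any F"
    by (rule Sum_any.cong) (simp add: A_def B_def add_divide_distrib[symmetric] distrib_right[symmetric] add.commute)
  also have "\<dots> = 1"
    unfolding F_def using Suc.IH k by simp
  finally show ?case .
qed

section \<open>The refinement mask\<close>

text \<open>The coefficient of \<open>z\<^sup>j\<close> in \<open>(1 + z + \<dots> + z\<^sup>n\<^sup>-\<^sup>1)\<^sup>m\<close>.\<close>
fun box_coeff :: "nat \<Rightarrow> nat \<Rightarrow> int \<Rightarrow> real" where
  "box_coeff n 0 j = (if j = 0 then 1 else 0)"
| "box_coeff n (Suc m) j = (\<Sum>t<n. box_coeff n m (j - int t))"

lemma box_coeff_nonzero_imp_bounds: "box_coeff n m j \<noteq> 0 \<Longrightarrow> 0 \<le> j \<and> j \<le> (int n - 1) * int m"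
proof (induction m arbitrary: j)
  case (Suc m)
  then obtain t where "t < n" "box_coeff n m (j - int t) \<noteq> 0"
    by (auto elim: sum.not_neutral_contains_not_neutral)
  with Suc.IH[of "j - int t"] show ?case by (auto simp: algebra_simps)
qed (simp split: if_splits)

lemma box_coeff_nonneg: "0 \<le> box_coeff n m j"
  by (induction m arbitrary: j) (auto intro: sum_nonneg)

lemma box_coeff_pos:
  assumes "1 \<le> n" "0 \<le> j" "j \<le> (int n - 1) * int m"
  shows "0 < box_coeff n m j"
  using assms(2,3)
proof (induction m arbitrary: j)
  case (Suc m)
  define t where "t = (if j \<le> (int n - 1) * int m then 0 else j - (int n - 1) * int m)"
  have "int m * 1 \<le> int m * int n" by (rule mult_left_mono) (use assms(1) in auto)
  then have t: "0 \<le> t" "t < int n" "0 \<le> j - t" "j - t \<le> (int n - 1) * int m"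
    using Suc.prems assms(1) unfolding t_def by (auto simp: algebra_simps)
  have "0 < box_coeff n m (j - int (nat t))" using Suc.IH[of "j - t"] t by simp
  also have "\<dots> \<le> (\<Sum>t<n. box_coeff n m (j - int t))"
    by (rule member_le_sum[of "nat t"]) (use t in \<open>auto intro: box_coeff_nonneg\<close>)
  finally show ?case by simp
qed simp

lemma finite_box_coeff_support: "finite {j. box_coeff n m (j - s) \<noteq> 0}"
proof (rule finite_subset)
  show "{j. box_coeff n m (j - s) \<noteq> 0} \<subseteq> {s .. s + (int n - 1) * int m}"
    using box_coeff_nonzero_imp_bounds by fastforce
qed simp

lemma box_coeff_one: "box_coeff n (Suc 0) j = (if 0 \<le> j \<and> j < int n then 1 else 0)"
proof (cases "0 \<le> j")
  case True
  have "box_coeff n (Suc 0) j = (\<Sum>t<n. if t = nat j then 1 else 0)"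
    unfolding box_coeff.simps(2) by (rule sum.cong) (use True in auto)
  then show ?thesis using True by auto
qed auto

text \<open>Multiplying by \<open>1 - z\<close> telescopes one factor of \<open>(1 + \<dots> + z\<^sup>n\<^sup>-\<^sup>1)\<close> to \<open>1 - z\<^sup>n\<close>.\<close>
lemma box_coeff_Suc_diff:
  "box_coeff n (Suc m) j - box_coeff n (Suc m) (j - 1) = box_coeff n m j - box_coeff n m (j - int n)"
proof -
  have "box_coeff n (Suc m) j - box_coeff n (Suc m) (j - 1)
      = (\<Sum>t<n. box_coeff n m (j - int t) - box_coeff n m (j - int (Suc t)))"
    by (simp add: sum_subtractf algebra_simps)
  also have "\<dots> = box_coeff n m j - box_coeff n m (j - int n)"
    using sum_lessThan_telescope'[where f = "\<lambda>t. box_coeff n m (j - int t)"] by simp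
  finally show ?thesis .
qed

text \<open>Coefficientwise form of \<open>z (1 - z) P' = (k + 1) (z P - n z\<^sup>n R\<^sup>k)\<close> for
  \<open>R = 1 + z + \<dots> + z\<^sup>n\<^sup>-\<^sup>1\<close>, \<open>P = R\<^sup>k\<^sup>+\<^sup>1\<close>, which follows from \<open>(1 - z) R' = R - n z\<^sup>n\<^sup>-\<^sup>1\<close>.\<close>
lemma box_coeff_Suc_weighted_diff:
  "- of_int j * box_coeff n (Suc k) j + (real k + of_int j) * box_coeff n (Suc k) (j - 1)
     = real (Suc k) * real n * box_coeff n k (j - int n)"
proof (induction k arbitrary: j)
  case 0
  show ?case unfolding box_coeff_one by auto
next
  case (Suc k)
  define c where "c = box_coeff n (Suc k)"
  define g where "g t = real t * c (j - int t)" for t :: nat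
  have sum_j: "box_coeff n (Suc (Suc k)) j = (\<Sum>t<n. c (j - int t))"
    unfolding c_def by (rule box_coeff.simps(2))
  have sum_j1: "box_coeff n (Suc (Suc k)) (j - 1) = (\<Sum>t<n. c (j - int t - 1))"
    unfolding c_def box_coeff.simps(2)[of n "Suc k"] by (rule sum.cong) (simp_all add: algebra_simps)
  have "- of_int j * box_coeff n (Suc (Suc k)) j + (real (Suc k) + of_int j) * box_coeff n (Suc (Suc k)) (j - 1)
     = (\<Sum>t<n. - of_int j * c (j - int t) + (real (Suc k) + of_int j) * c (j - int t - 1))"
    unfolding sum_j sum_j1 sum_distrib_left sum.distrib[symmetric] by simp
  also have "\<dots> = (\<Sum>t<n. (- of_int (j - int t) * c (j - int t) + (real k + of_int (j - int t)) * c (j - int t - 1))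
               + (g (Suc t) - g t))"
    by (rule sum.cong) (simp_all add: g_def algebra_simps)
  also have "\<dots> = (\<Sum>t<n. real (Suc k) * real n * box_coeff n k (j - int t - int n)) + (g n - g 0)"
    unfolding sum.distrib c_def Suc.IH sum_lessThan_telescope by simp
  also have "(\<Sum>t<n. real (Suc k) * real n * box_coeff n k (j - int t - int n)) = real (Suc k) * real n * c (j - int n)"
    unfolding c_def box_coeff.simps(2)[of n k] sum_distrib_left by (rule sum.cong) (simp_all add: algebra_simps)
  finally show ?case
    by (simp add: g_def c_def algebra_simps)
qed

definition refinement_mask :: "nat \<Rightarrow> nat \<Rightarrow> int \<Rightarrow> real" where
  "refinement_mask n m j = box_coeff n m j / real n ^ (m - 1)"

lemma refinement_mask_pos:
  "1 \<le> n \<Longrightarrow> 0 \<le> j \<Longrightarrow> j \<le> (int n - 1) * int m \<Longrightarrow> 0 < refinement_mask n m j"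
  unfolding refinement_mask_def by (simp add: box_coeff_pos)

lemma finite_refinement_mask_support: "finite {j. refinement_mask n m (j - s) \<noteq> 0}"
  by (rule finite_nonzero_mono[OF finite_box_coeff_support[of n m s]]) (simp add: refinement_mask_def)

lemma refinement_mask_Suc_Suc:
  assumes "1 \<le> n"
  shows "refinement_mask n (Suc (Suc k)) i * (real n * y - of_int i)
         + refinement_mask n (Suc (Suc k)) (i - 1) * (real k + 1 - real n * y + of_int i)
       = y * refinement_mask n (Suc k) i + (real k + 2 - y) * refinement_mask n (Suc k) (i - int n)"
proof -
  define C2 where "C2 = box_coeff n (Suc (Suc k))"
  define C1 where "C1 = box_coeff n (Suc k)"
  have "C2 i * (real n * y - of_int i) + C2 (i - 1) * (real k + 1 - real n * y + of_int i)
      = real n * y * (C2 i - C2 (i - 1)) + (- of_int i * C2 i + (real (Suc k) + of_int i) * C2 (i - 1))"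
    by (simp add: algebra_simps)
  also have "\<dots> = real n * (y * C1 i + (real k + 2 - y) * C1 (i - int n))"
    unfolding C1_def C2_def box_coeff_Suc_diff box_coeff_Suc_weighted_diff by (simp add: algebra_simps)
  finally have H: "C2 i * (real n * y - of_int i) + C2 (i - 1) * (real k + 1 - real n * y + of_int i)
      = real n * (y * C1 i + (real k + 2 - y) * C1 (i - int n))" .
  have mask2: "refinement_mask n (Suc (Suc k)) j = C2 j / (real n * real n ^ k)" for j
    by (simp add: refinement_mask_def C2_def)
  have mask1: "refinement_mask n (Suc k) j = C1 j / real n ^ k" for j
    by (simp add: refinement_mask_def C1_def)
  have "real n \<noteq> 0" using assms by simp
  then show ?thesis
    unfolding mask1 mask2 using arg_cong[OF H, of "\<lambda>u. u / (real n * real n ^ k)"]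
    by (simp add: add_divide_distrib)
qed

lemma bspline_one_refinement:
  assumes "1 \<le> n"
  shows "bspline 1 y = Sum_any (\<lambda>j. refinement_mask n 1 j * bspline 1 (real n * y - of_int j))"
proof -
  let ?f = "\<lfloor>real n * y\<rfloor>"
  have mask: "refinement_mask n 1 j = (if 0 \<le> j \<and> j < int n then 1 else 0)" for j
    by (simp only: refinement_mask_def One_nat_def box_coeff_one) simp
  have "refinement_mask n 1 j * bspline 1 (real n * y - of_int j)
      = (if j = ?f then if 0 \<le> ?f \<and> ?f < int n then 1 else 0 else 0)" for j
    by (simp only: mask bspline_one_eq_indicator) simp
  then have "Sum_any (\<lambda>j. refinement_mask n 1 j * bspline 1 (real n * y - of_int j))
      = (if 0 \<le> ?f \<and> ?f < int n then 1 else 0)"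
    by simp
  also have "(0 \<le> ?f \<and> ?f < int n) \<longleftrightarrow> (0 \<le> y \<and> y < 1)"
    using assms by (auto simp: floor_less_iff zero_le_mult_iff)
  finally show ?thesis by simp
qed

text \<open>The Cox--de Boor recurrence for \<open>Q\<^sub>k\<^sub>+\<^sub>2(n y - j)\<close>, regrouped by \<open>refinement_mask_Suc_Suc\<close>
  into the shape of the recurrence for \<open>Q\<^sub>k\<^sub>+\<^sub>2(y)\<close>.\<close>
lemma Sum_any_refinement_mask_bspline_Suc_Suc:
  assumes "1 \<le> n"
  shows "Sum_any (\<lambda>j. refinement_mask n (Suc (Suc k)) j * bspline (Suc (Suc k)) (real n * y - of_int j))
       = Sum_any (\<lambda>i. y / real (Suc k)
                        * (refinement_mask n (Suc k) i * bspline (Suc k) (real n * y - of_int i))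
                   + (real k + 2 - y) / real (Suc k)
                        * (refinement_mask n (Suc k) (i - int n) * bspline (Suc k) (real n * y - of_int i)))"
proof -
  define z where "z = real n * y"
  define a2 where "a2 = refinement_mask n (Suc (Suc k))"
  define a1 where "a1 = refinement_mask n (Suc k)"
  define Q where "Q = bspline (Suc k)"
  define A where "A j = a2 j * (z - of_int j) * Q (z - of_int j) / real (Suc k)" for j
  define B where "B i = a2 (i - 1) * (real k + 1 - z + of_int i) * Q (z - of_int i) / real (Suc k)" for i
  have fin_a2: "finite {j. a2 (j - s) \<noteq> 0}" for s
    unfolding a2_def by (rule finite_refinement_mask_support)
  have "Sum_any (\<lambda>j. a2 j * bspline (Suc (Suc k)) (z - of_int j)) = Sum_any (\<lambda>j. A j + B (j + 1))"
  proof (rule Sum_any.cong)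
    fix j
    have "a2 j * bspline (Suc (Suc k)) (z - of_int j)
        = a2 j * (((z - of_int j) * Q (z - of_int j)
                   + (real k + 2 - (z - of_int j)) * Q (z - of_int (j + 1))) / real (Suc k))"
      by (simp only: Q_def bspline_Suc_Suc_translate)
    also have "\<dots> = A j + B (j + 1)"
      by (simp add: A_def B_def add_divide_distrib diff_divide_distrib algebra_simps)
    finally show "a2 j * bspline (Suc (Suc k)) (z - of_int j) = A j + B (j + 1)" .
  qed
  also have "\<dots> = Sum_any (\<lambda>i. A i + B i)"
    by (rule Sum_any_int_add_shift)
      (rule finite_nonzero_mono[OF fin_a2[of 0]], simp add: A_def,
       rule finite_nonzero_mono[OF fin_a2[of 1]], simp add: B_def)
  also have "\<dots> = Sum_any (\<lambda>i. y / real (Suc k) * (a1 i * Q (z - of_int i))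
                    + (real k + 2 - y) / real (Suc k) * (a1 (i - int n) * Q (z - of_int i)))"
  proof (rule Sum_any.cong)
    fix i
    have split: "(y * a + b * c) * q / r = y / r * (a * q) + b / r * (c * q)" for a b c q r :: real
      by (simp add: add_divide_distrib algebra_simps)
    have "A i + B i = (a2 i * (z - of_int i) + a2 (i - 1) * (real k + 1 - z + of_int i))
                       * Q (z - of_int i) / real (Suc k)"
      by (simp add: A_def B_def add_divide_distrib distrib_right)
    also have "\<dots> = (y * a1 i + (real k + 2 - y) * a1 (i - int n)) * Q (z - of_int i) / real (Suc k)"
      unfolding a1_def a2_def z_def using assms by (simp only: refinement_mask_Suc_Suc)
    finally show "A i + B i = y / real (Suc k) * (a1 i * Q (z - of_int i))
                    + (real k + 2 - y) / real (Suc k) * (a1 (i - int n) * Q (z - of_int i))"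
      by (simp only: split)
  qed
  finally show ?thesis
    by (simp only: z_def a1_def a2_def Q_def)
qed

lemma bspline_refinement:
  assumes "1 \<le> m" "1 \<le> n"
  shows "bspline m y = Sum_any (\<lambda>j. refinement_mask n m j * bspline m (real n * y - of_int j))"
  using assms(1)
proof (induction m arbitrary: y rule: nat_induct_at_least)
  case base
  show ?case using assms(2) by (rule bspline_one_refinement)
next
  case (Suc mm)
  then obtain k where k: "mm = Suc k" by (metis Suc_le_D One_nat_def)
  define a where "a = refinement_mask n (Suc k)"
  define Q where "Q = bspline (Suc k)"
  have IH: "Q u = Sum_any (\<lambda>j. a j * Q (real n * u - of_int j))" for u
    unfolding Q_def a_def k[symmetric] by (rule Suc.IH)
  have fin_a: "finite {i. a (i - s) * Q (real n * y - of_int i) \<noteq> 0}" for s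
    by (rule finite_nonzero_mono[OF finite_refinement_mask_support[of n "Suc k" s]]) (simp add: a_def)
  have fin_a0: "finite {i. a i * Q (real n * y - of_int i) \<noteq> 0}"
    using fin_a[of 0] by simp
  have "Sum_any (\<lambda>j. refinement_mask n (Suc mm) j * bspline (Suc mm) (real n * y - of_int j))
      = y / real (Suc k) * Sum_any (\<lambda>i. a i * Q (real n * y - of_int i))
        + (real k + 2 - y) / real (Suc k) * Sum_any (\<lambda>i. a (i - int n) * Q (real n * y - of_int i))"
    unfolding k Sum_any_refinement_mask_bspline_Suc_Suc[OF assms(2)] a_def[symmetric] Q_def[symmetric]
    by (rule Sum_any_lincomb[OF fin_a0 fin_a])
  also have "Sum_any (\<lambda>i. a i * Q (real n * y - of_int i)) = Q y"
    by (rule IH[symmetric])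
  also have "Sum_any (\<lambda>i. a (i - int n) * Q (real n * y - of_int i))
      = Sum_any (\<lambda>j. a j * Q (real n * (y - 1) - of_int j))"
    by (subst Sum_any_int_shift[where s = "int n", symmetric]) (simp add: algebra_simps)
  also have "\<dots> = Q (y - 1)"
    by (rule IH[symmetric])
  also have "y / real (Suc k) * Q y + (real k + 2 - y) / real (Suc k) * Q (y - 1) = bspline (Suc mm) y"
    unfolding k Q_def by (simp add: add_divide_distrib)
  finally show ?case ..
qed

lemma bspline_refinement_translate:
  assumes "1 \<le> m" "1 \<le> n"
  shows "bspline m (y - of_int s) = (\<Sum>j\<in>{int n * s .. int n * s + (int n - 1) * int m}.
           refinement_mask n m (j - int n * s) * bspline m (real n * y - of_int j))"
proof -
  have "bspline m (y - of_int s)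
      = Sum_any (\<lambda>j. refinement_mask n m j * bspline m (real n * (y - of_int s) - of_int j))"
    by (rule bspline_refinement[OF assms])
  also have "\<dots> = Sum_any (\<lambda>j. refinement_mask n m (j - int n * s) * bspline m (real n * y - of_int j))"
    by (subst (2) Sum_any_int_shift[where s = "int n * s", symmetric]) (simp add: algebra_simps)
  also have "\<dots> = (\<Sum>j\<in>{int n * s .. int n * s + (int n - 1) * int m}.
           refinement_mask n m (j - int n * s) * bspline m (real n * y - of_int j))"
    by (rule Sum_any.expand_superset)
      (auto simp: refinement_mask_def dest: box_coeff_nonzero_imp_bounds)
  finally show ?thesis .
qed

section \<open>Tensor-product B-splines\<close>

definition list_box :: "nat \<Rightarrow> (nat \<Rightarrow> 'a set) \<Rightarrow> 'a list set" where
  "list_box d S = {js. length js = d \<and> (\<forall>k<d. js ! k \<in> S k)}"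

lemma bij_betw_PiE_list_box: "bij_betw (\<lambda>g. map g [0..<d]) (PiE {..<d} S) (list_box d S)"
proof (rule bij_betw_byWitness[where f' = "\<lambda>js. restrict (\<lambda>k. js ! k) {..<d}"])
  show "\<forall>g\<in>PiE {..<d} S. restrict (\<lambda>k. map g [0..<d] ! k) {..<d} = g"
  proof
    fix g assume "g \<in> PiE {..<d} S"
    moreover have "restrict (\<lambda>k. map g [0..<d] ! k) {..<d} = restrict g {..<d}"
      by (rule restrict_ext) simp
    ultimately show "restrict (\<lambda>k. map g [0..<d] ! k) {..<d} = g"
      by simp
  qed
  show "\<forall>js\<in>list_box d S. map (\<lambda>k. restrict (\<lambda>k. js ! k) {..<d} k) [0..<d] = js"
  proof
    fix js assume "js \<in> list_box d S"
    then have "length js = d" by (simp add: list_box_def)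
    then show "map (\<lambda>k. restrict (\<lambda>k. js ! k) {..<d} k) [0..<d] = js"
      by (intro nth_equalityI) simp_all
  qed
  show "(\<lambda>g. map g [0..<d]) ` PiE {..<d} S \<subseteq> list_box d S"
    by (rule image_subsetI) (simp add: list_box_def PiE_iff)
  show "(\<lambda>js. restrict (\<lambda>k. js ! k) {..<d}) ` list_box d S \<subseteq> PiE {..<d} S"
    by (rule image_subsetI) (simp add: list_box_def PiE_iff)
qed

lemma finite_list_box: "(\<And>k. k < d \<Longrightarrow> finite (S k)) \<Longrightarrow> finite (list_box d S)"
  using bij_betw_finite[OF bij_betw_PiE_list_box, of d S] finite_PiE[of "{..<d}" S] by auto

lemma prod_sum_eq_sum_list_box:
  fixes f :: "nat \<Rightarrow> 'a \<Rightarrow> 'b::comm_semiring_1"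
  assumes "\<And>k. k < d \<Longrightarrow> finite (S k)"
  shows "(\<Prod>k<d. \<Sum>j\<in>S k. f k j) = (\<Sum>js\<in>list_box d S. \<Prod>k<d. f k (js ! k))"
proof -
  have "(\<Prod>k<d. \<Sum>j\<in>S k. f k j) = (\<Sum>g\<in>PiE {..<d} S. \<Prod>k<d. f k (g k))"
    by (rule prod_sum_PiE) (auto simp: assms)
  also have "\<dots> = (\<Sum>g\<in>PiE {..<d} S. \<Prod>k<d. f k (map g [0..<d] ! k))"
    by (rule sum.cong[OF refl], rule prod.cong) simp_all
  also have "\<dots> = (\<Sum>js\<in>list_box d S. \<Prod>k<d. f k (js ! k))"
    by (rule sum.reindex_bij_betw[OF bij_betw_PiE_list_box])
  finally show ?thesis .
qed

lemma B0_eq_list_box: "B0 d m = Pair 0 ` list_box d (\<lambda>_. {-(int m - 1)..0})"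
  by (auto simp: B0_def list_box_def)

lemma ch_eq_list_box:
  "ch n m (l, i) = Pair (Suc l) ` list_box (length i) (\<lambda>k. {int n * i!k .. int n * i!k + (int n - 1) * int m})"
  by (auto simp: ch_def list_box_def)

lemma finite_B0: "finite (B0 d m)"
  unfolding B0_eq_list_box by (simp add: finite_list_box)

lemma finite_ch: "finite (ch n m b)"
  by (cases b) (simp add: ch_eq_list_box finite_list_box)

lemma ch_level: "b' \<in> ch n m b \<Longrightarrow> fst b' = Suc (fst b)"
  by (auto simp: ch_def)

lemma sum_bspline_translates_unit_interval:
  assumes "2 \<le> m" "0 \<le> x" "x \<le> 1"
  shows "(\<Sum>j\<in>{-(int m - 1)..0}. bspline m (x - of_int j)) = 1"
proof -
  have support: "{j. bspline m (x - of_int j) \<noteq> 0} \<subseteq> {-(int m - 1)..0}"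
  proof
    fix j assume "j \<in> {j. bspline m (x - of_int j) \<noteq> 0}"
    then have "bspline m (x - of_int j) \<noteq> 0" by simp
    then have "0 < x - of_int j" "x - of_int j < real m"
      using bspline_nonzero_imp_pos[OF assms(1)] bspline_nonzero_imp_bounds by blast+
    with assms(2,3) have "- int m < j" "j < 1"
      by linarith+
    then show "j \<in> {-(int m - 1)..0}" by simp
  qed
  have "(\<Sum>j\<in>{-(int m - 1)..0}. bspline m (x - of_int j)) = Sum_any (\<lambda>j. bspline m (x - of_int j))"
    by (rule Sum_any.expand_superset[symmetric, OF finite_atLeastAtMost_int support])
  also have "\<dots> = 1"
    using assms(1) by (simp add: Sum_any_bspline_translates)
  finally show ?thesis .
qed

lemma sum_phi_B0:
  assumes "2 \<le> m" "\<forall>k<d. 0 \<le> x k \<and> x k \<le> 1"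
  shows "(\<Sum>b\<in>B0 d m. phi d n m b x) = 1"
proof -
  have "(\<Sum>b\<in>B0 d m. phi d n m b x)
      = (\<Sum>i\<in>list_box d (\<lambda>_. {-(int m - 1)..0}). \<Prod>k<d. bspline m (x k - of_int (i ! k)))"
    unfolding B0_eq_list_box by (subst sum.reindex) (auto simp: inj_on_def phi_def)
  also have "\<dots> = (\<Prod>k<d. \<Sum>j\<in>{-(int m - 1)..0}. bspline m (x k - of_int j))"
    by (rule prod_sum_eq_sum_list_box[symmetric]) simp
  also have "\<dots> = (\<Prod>k<d. 1)"
    using assms by (intro prod.cong refl sum_bspline_translates_unit_interval) auto
  finally show ?thesis by simp
qed

definition child_weight :: "nat \<Rightarrow> nat \<Rightarrow> nat \<Rightarrow> bidx \<Rightarrow> bidx \<Rightarrow> real" where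
  "child_weight d n m b b' = (\<Prod>k<d. refinement_mask n m (snd b' ! k - int n * snd b ! k))"

lemma child_weight_pos:
  assumes "1 \<le> n" "length (snd b) = d" "b' \<in> ch n m b"
  shows "0 < child_weight d n m b b'"
  unfolding child_weight_def
proof (rule prod_pos)
  fix k assume "k \<in> {..<d}"
  then show "0 < refinement_mask n m (snd b' ! k - int n * snd b ! k)"
    using assms by (intro refinement_mask_pos) (auto simp: ch_def)
qed

lemma phi_refinement:
  assumes "1 \<le> m" "1 \<le> n" "length (snd b) = d"
  shows "phi d n m b x = (\<Sum>b'\<in>ch n m b. child_weight d n m b b' * phi d n m b' x)"
proof -
  obtain l i where b: "b = (l, i)" by (cases b)
  have len: "length i = d" using assms(3) b by simp
  define S where "S k = {int n * i!k .. int n * i!k + (int n - 1) * int m}" for k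
  have "phi d n m b x = (\<Prod>k<d. bspline m (real n ^ l * x k - of_int (i!k)))"
    by (simp add: phi_def b)
  also have "\<dots> = (\<Prod>k<d. \<Sum>j\<in>S k. refinement_mask n m (j - int n * i!k)
                                  * bspline m (real n ^ Suc l * x k - of_int j))"
    unfolding S_def by (rule prod.cong[OF refl], subst bspline_refinement_translate[OF assms(1,2)])
      (simp add: mult.assoc)
  also have "\<dots> = (\<Sum>js\<in>list_box d S. \<Prod>k<d. refinement_mask n m (js!k - int n * i!k)
                                             * bspline m (real n ^ Suc l * x k - of_int (js!k)))"
    by (rule prod_sum_eq_sum_list_box) (simp add: S_def)
  also have "\<dots> = (\<Sum>js\<in>list_box d S. child_weight d n m b (Suc l, js) * phi d n m (Suc l, js) x)"
    by (simp add: child_weight_def phi_def b prod.distrib)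
  also have "\<dots> = (\<Sum>b'\<in>ch n m b. child_weight d n m b b' * phi d n m b' x)"
    unfolding b ch_eq_list_box len S_def[symmetric] by (subst sum.reindex) (auto simp: inj_on_def)
  finally show ?thesis .
qed

section \<open>Hierarchical generators\<close>

definition positively_represents_one :: "'x set \<Rightarrow> ('b \<Rightarrow> 'x \<Rightarrow> real) \<Rightarrow> 'b set \<Rightarrow> bool" where
  "positively_represents_one X f G \<longleftrightarrow>
     (\<exists>c. (\<forall>b\<in>G. 0 < c b) \<and> (\<forall>x\<in>X. (\<Sum>b\<in>G. c b * f b x) = 1))"

lemma positively_represents_one_refine:
  assumes "positively_represents_one X f G" "finite G" "p \<in> G" "finite C"
    and w_pos: "\<And>b. b \<in> C \<Longrightarrow> 0 < w b"
    and refine: "\<And>x. x \<in> X \<Longrightarrow> f p x = (\<Sum>b\<in>C. w b * f b x)"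
  shows "positively_represents_one X f (G - {p} \<union> C)"
proof -
  obtain c where c_pos: "\<And>b. b \<in> G \<Longrightarrow> 0 < c b"
    and c_sum: "\<And>x. x \<in> X \<Longrightarrow> (\<Sum>b\<in>G. c b * f b x) = 1"
    using assms(1) unfolding positively_represents_one_def by blast
  let ?G' = "G - {p} \<union> C"
  define c' where "c' b = (if b \<in> G - {p} then c b else 0) + (if b \<in> C then c p * w b else 0)" for b
  have "0 < c' b" if "b \<in> ?G'" for b
    using that c_pos[of b] c_pos[OF assms(3)] w_pos[of b] unfolding c'_def
    by (auto intro: add_pos_nonneg add_nonneg_pos)
  moreover have "(\<Sum>b\<in>?G'. c' b * f b x) = 1" if "x \<in> X" for x
  proof -
    have "(\<Sum>b\<in>?G'. c' b * f b x)
        = (\<Sum>b\<in>?G'. (if b \<in> G - {p} then c b * f b x else 0) + c p * (if b \<in> C then w b * f b x else 0))"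
      by (rule sum.cong) (auto simp: c'_def algebra_simps)
    also have "\<dots> = (\<Sum>b\<in>?G'. if b \<in> G - {p} then c b * f b x else 0)
                     + c p * (\<Sum>b\<in>?G'. if b \<in> C then w b * f b x else 0)"
      by (simp add: sum.distrib sum_distrib_left)
    also have "\<dots> = (\<Sum>b\<in>?G' \<inter> (G - {p}). c b * f b x) + c p * (\<Sum>b\<in>?G' \<inter> C. w b * f b x)"
      using assms(2,4) by (simp only: sum.inter_restrict finite_Un finite_Diff)
    also have "?G' \<inter> (G - {p}) = G - {p}" by blast
    also have "?G' \<inter> C = C" by blast
    also have "(\<Sum>b\<in>G - {p}. c b * f b x) + c p * (\<Sum>b\<in>C. w b * f b x) = (\<Sum>b\<in>G. c b * f b x)"
      using assms(2,3) refine[OF that] by (simp add: sum.remove)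
    finally show ?thesis using c_sum[OF that] by simp
  qed
  ultimately show ?thesis
    unfolding positively_represents_one_def by blast
qed

lemma hgen_empty: "hgen d n m {} = B0 d m"
  by (simp add: hgen_def chs_def)

lemma finite_hgen: "finite L \<Longrightarrow> finite (hgen d n m L)"
  by (simp add: hgen_def chs_def finite_B0 finite_ch)

text \<open>Everything follows from the fact that a node of maximal level has no children in the lineage.\<close>
lemma lineage_remove_top_level:
  assumes L: "lineage d n m L" and p: "p \<in> L" and top: "\<forall>q\<in>L. fst q \<le> fst p"
  shows "lineage d n m (L - {p})" "p \<in> hgen d n m (L - {p})"
    and "hgen d n m L = hgen d n m (L - {p}) - {p} \<union> ch n m p"
proof -
  have no_child: "b \<notin> L" if "b \<in> ch n m p" for b
    using that top ch_level by fastforce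
  have L_sub: "L \<subseteq> B0 d m \<union> chs n m L"
    using L by (simp add: lineage_def)
  have parent: "b \<in> B0 d m \<union> chs n m (L - {p})" if "b \<in> L" for b
    using that L_sub no_child[of b] unfolding chs_def by blast
  show "lineage d n m (L - {p})"
    using L parent by (auto simp: lineage_def)
  show "p \<in> hgen d n m (L - {p})"
    using parent[OF p] by (simp add: hgen_def)
  have "chs n m L = chs n m (L - {p}) \<union> ch n m p"
    using p by (auto simp: chs_def)
  then show "hgen d n m L = hgen d n m (L - {p}) - {p} \<union> ch n m p"
    using no_child p by (auto simp: hgen_def ch_def)
qed

lemma hgen_positively_represents_one:
  assumes "1 \<le> n" "2 \<le> m" "lineage d n m L"
  shows "positively_represents_one {x. \<forall>k<d. 0 \<le> x k \<and> x k \<le> 1} (phi d n m) (hgen d n m L)"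
  using assms(3)
proof (induction "card L" arbitrary: L rule: less_induct)
  case less
  have finL: "finite L" using less.prems by (simp add: lineage_def)
  show ?case
  proof (cases "L = {}")
    case True
    then show ?thesis
      unfolding True hgen_empty positively_represents_one_def
      using assms(2) by (intro exI[of _ "\<lambda>_. 1"]) (simp add: sum_phi_B0)
  next
    case False
    obtain p where p: "p \<in> L" and top: "\<forall>q\<in>L. fst q \<le> fst p"
      using Max_in[of "fst ` L"] Max_ge[of "fst ` L"] finL False by fastforce
    have len: "length (snd p) = d"
      using less.prems p by (auto simp: lineage_def allB_def)
    note removed = lineage_remove_top_level[OF less.prems p top]
    have "positively_represents_one {x. \<forall>k<d. 0 \<le> x k \<and> x k \<le> 1} (phi d n m) (hgen d n m (L - {p}))"
      by (rule less.hyps[OF card_Diff1_less[OF finL p] removed(1)])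
    then show ?thesis
      unfolding removed(3)
      using finL removed(2) assms(1,2) len
      by (intro positively_represents_one_refine[where w = "child_weight d n m p"])
        (auto simp: finite_hgen finite_ch child_weight_pos phi_refinement)
  qed
qed

theorem lemma4p10:
  fixes d n m :: nat and H :: "bidx set"
  assumes "d \<ge> 1" and "n \<ge> 2" and "m \<ge> 2"
    and "hierarchical_generator d n m H"
  shows "\<exists>c :: bidx \<Rightarrow> real. (\<forall>b\<in>H. c b > 0) \<and>
           (\<forall>x :: nat \<Rightarrow> real. (\<forall>k<d. 0 \<le> x k \<and> x k \<le> 1) \<longrightarrow>
              (\<Sum>b\<in>H. c b * phi d n m b x) = 1)"
proof -
  obtain L where "lineage d n m L" and "H = hgen d n m L"
    using assms(4) unfolding hierarchical_generator_def by blast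
  then have "positively_represents_one {x. \<forall>k<d. 0 \<le> x k \<and> x k \<le> 1} (phi d n m) H"
    using assms(2,3) by (simp add: hgen_positively_represents_one)
  then show ?thesis
    unfolding positively_represents_one_def by auto
qed

end
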